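(* Let $G$ be a Nash equilibrium graph of the sum network creation game with $n$ players and let $H\subseteq G$ be a non-trivial $2$-edge-connected component of $G$. Then $|D(u)-D(v)|\le 3n$ for all $u,v\in V(H)$.
   Context: Sum network creation game: players $V=\{1,\dots,n\}$, parameter $\alpha>0$; a strategy of $u$ is $s_u\subseteq V\setminus\{u\}$; the graph $G_s$ has vertex set $V$ and an edge $uv$ whenever $v\in s_u$ or $u\in s_v$; the cost of $u$ is $c_u(s)=\alpha|s_u|+\sum_{v\neq u}d_{G_s}(u,v)$. A Nash equilibrium is a strategy vector from which no player can strictly decrease his cost by changing only his own strategy; a Nash equilibrium graph is $G=G_s$ for such $s$. For a vertex $u$, $D(u)=\sum_{v\ne u} d_G(u,v)$. A $2$-edge-connected component of $G$ is a maximal subgraph of $G$ with no bridges; it is non-trivial if it has at least $3$ vertices. *)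

theory Defs
  imports Complex_Main "HOL-Library.Extended_Real"
begin

definition players :: "nat \<Rightarrow> nat set" where
  "players n = {1..n}"

definition valid_profile :: "nat \<Rightarrow> (nat \<Rightarrow> nat set) \<Rightarrow> bool" where
  "valid_profile n s \<longleftrightarrow> (\<forall>u\<in>players n. s u \<subseteq> players n - {u})"

definition adj :: "nat \<Rightarrow> (nat \<Rightarrow> nat set) \<Rightarrow> nat \<Rightarrow> nat \<Rightarrow> bool" where
  "adj n s u v \<longleftrightarrow> u \<in> players n \<and> v \<in> players n \<and> u \<noteq> v \<and> (v \<in> s u \<or> u \<in> s v)"

definition adj_rel :: "nat \<Rightarrow> (nat \<Rightarrow> nat set) \<Rightarrow> (nat \<times> nat) set" where
  "adj_rel n s = {(u, v). adj n s u v}"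

definition edges :: "nat \<Rightarrow> (nat \<Rightarrow> nat set) \<Rightarrow> nat set set" where
  "edges n s = {{u, v} | u v. adj n s u v}"

definition gdist :: "nat \<Rightarrow> (nat \<Rightarrow> nat set) \<Rightarrow> nat \<Rightarrow> nat \<Rightarrow> enat" where
  "gdist n s u v =
     (if \<exists>k. (u, v) \<in> adj_rel n s ^^ k then enat (LEAST k. (u, v) \<in> adj_rel n s ^^ k) else \<infinity>)"

definition Dsum :: "nat \<Rightarrow> (nat \<Rightarrow> nat set) \<Rightarrow> nat \<Rightarrow> ereal" where
  "Dsum n s u = (\<Sum>v\<in>players n - {u}. ereal_of_enat (gdist n s u v))"

definition cost :: "real \<Rightarrow> nat \<Rightarrow> (nat \<Rightarrow> nat set) \<Rightarrow> nat \<Rightarrow> ereal" where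
  "cost \<alpha> n s u = ereal (\<alpha> * real (card (s u))) + Dsum n s u"

definition nash_eq :: "real \<Rightarrow> nat \<Rightarrow> (nat \<Rightarrow> nat set) \<Rightarrow> bool" where
  "nash_eq \<alpha> n s \<longleftrightarrow> valid_profile n s \<and>
     (\<forall>u\<in>players n. \<forall>t. t \<subseteq> players n - {u} \<longrightarrow> \<not> cost \<alpha> n (s(u := t)) u < cost \<alpha> n s u)"

definition subgraph :: "nat \<Rightarrow> (nat \<Rightarrow> nat set) \<Rightarrow> nat set \<Rightarrow> nat set set \<Rightarrow> bool" where
  "subgraph n s W F \<longleftrightarrow> W \<subseteq> players n \<and> F \<subseteq> edges n s \<and> (\<forall>e\<in>F. e \<subseteq> W)"

definition sg_connected :: "nat set \<Rightarrow> nat set set \<Rightarrow> bool" where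
  "sg_connected W F \<longleftrightarrow> (\<forall>x\<in>W. \<forall>y\<in>W. (x, y) \<in> {(a, b). {a, b} \<in> F}\<^sup>*)"

definition bridgeless :: "nat set \<Rightarrow> nat set set \<Rightarrow> bool" where
  "bridgeless W F \<longleftrightarrow> (\<forall>e\<in>F. sg_connected W (F - {e}))"

definition two_ec :: "nat \<Rightarrow> (nat \<Rightarrow> nat set) \<Rightarrow> nat set \<Rightarrow> nat set set \<Rightarrow> bool" where
  "two_ec n s W F \<longleftrightarrow> W \<noteq> {} \<and> subgraph n s W F \<and> sg_connected W F \<and> bridgeless W F"

definition two_ec_component :: "nat \<Rightarrow> (nat \<Rightarrow> nat set) \<Rightarrow> nat set \<Rightarrow> nat set set \<Rightarrow> bool" where
  "two_ec_component n s W F \<longleftrightarrow> two_ec n s W F \<and>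
     (\<forall>W' F'. two_ec n s W' F' \<and> W \<subseteq> W' \<and> F \<subseteq> F' \<longrightarrow> W' = W \<and> F' = F)"

end

theory Submission
  imports Defs
begin

text \<open>
  A Nash equilibrium graph is connected, and the main tool is an edge swap: if a player \<open>w\<close>
  who buys the edge \<open>wy\<close> replaced it by an edge to \<open>z\<close>, then, as long as a breadth-first search
  from \<open>z\<close> does not need the edge \<open>wy\<close>, every vertex \<open>x\<close> would be at distance at most
  \<open>1 + d(z, x)\<close> from \<open>w\<close>; equilibrium then gives \<open>D(w) \<le> n + D(z)\<close>.

  Fix \<open>v\<close> and measure levels by the distance from \<open>v\<close>. A vertex \<open>t\<close> of the component with no
  component neighbour on a higher level has two component neighbours (no bridges) on levels
  at most that of \<open>t\<close>; a swap at \<open>t\<close> or at one of these neighbours gives \<open>D(t) \<le> 2n + D(v)\<close>.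
  Climbing up the levels, every \<open>q\<close> of the component lies on a shortest path from \<open>v\<close> to such a
  \<open>t\<close>. Finally, if \<open>u\<close> has a component neighbour \<open>q\<close> one level higher that \<open>u\<close> buys,
  \<open>u\<close> swaps \<open>uq\<close> for an edge to the \<open>t\<close> above \<open>q\<close>, so \<open>D(u) \<le> n + D(t) \<le> 3n + D(v)\<close>.
\<close>

text \<open>\<open>LEAST\<close> of an empty set is unspecified, so the facts below assume reachability.\<close>

definition hop_dist :: "'a rel \<Rightarrow> 'a \<Rightarrow> 'a \<Rightarrow> nat" where
  "hop_dist R x y = (LEAST k. (x, y) \<in> R ^^ k)"

lemma hop_dist_le: "(x, y) \<in> R ^^ k \<Longrightarrow> hop_dist R x y \<le> k"
  unfolding hop_dist_def by (rule Least_le)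

lemma relpow_hop_dist: "(x, y) \<in> R\<^sup>* \<Longrightarrow> (x, y) \<in> R ^^ hop_dist R x y"
  unfolding hop_dist_def rtrancl_power by (auto intro: LeastI)

lemma hop_dist_self [simp]: "hop_dist R x x = 0"
  using hop_dist_le[where R = R and x = x and y = x and k = 0] by simp

lemma hop_dist_eq_0_iff: "(x, y) \<in> R\<^sup>* \<Longrightarrow> hop_dist R x y = 0 \<longleftrightarrow> x = y"
  using relpow_hop_dist[of x y R] by auto

lemma hop_dist_triangle:
  assumes "(x, y) \<in> R\<^sup>*" and "(y, z) \<in> R\<^sup>*"
  shows "hop_dist R x z \<le> hop_dist R x y + hop_dist R y z"
  using relpow_hop_dist[OF assms(1)] relpow_hop_dist[OF assms(2)]
  by (intro hop_dist_le) (auto simp: relpow_add)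

lemma hop_dist_step:
  assumes "(x, y) \<in> R\<^sup>*" and "(y, z) \<in> R"
  shows "hop_dist R x z \<le> Suc (hop_dist R x y)"
  using hop_dist_triangle[OF assms(1) r_into_rtrancl[OF assms(2)]]
    hop_dist_le[where R = R and x = y and y = z and k = 1] assms(2)
  by simp

lemma hop_dist_SucE:
  assumes "(x, z) \<in> R\<^sup>*" and "hop_dist R x z = Suc k"
  obtains y where "(x, y) \<in> R\<^sup>*" and "(y, z) \<in> R" and "hop_dist R x y = k"
proof -
  obtain y where y: "(x, y) \<in> R ^^ k" "(y, z) \<in> R"
    using relpow_hop_dist[OF assms(1)] assms(2) by (auto elim: relpow_Suc_E)
  have reach: "(x, y) \<in> R\<^sup>*"
    using y(1) rtrancl_power by blast
  have "Suc k \<le> Suc (hop_dist R x y)"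
    using hop_dist_step[OF reach y(2)] assms(2) by simp
  with hop_dist_le[OF y(1)] have "hop_dist R x y = k"
    by simp
  with reach y(2) show thesis
    using that by blast
qed

lemma relpow_sym: "sym R \<Longrightarrow> (x, y) \<in> R ^^ k \<Longrightarrow> (y, x) \<in> R ^^ k"
proof (induction k arbitrary: y)
  case (Suc k)
  then obtain p where "(x, p) \<in> R ^^ k" "(p, y) \<in> R"
    by (blast elim: relpow_Suc_E)
  with Suc show ?case
    by (blast intro: relpow_Suc_I2 dest: symD)
qed simp

lemma hop_dist_sym: "sym R \<Longrightarrow> hop_dist R x y = hop_dist R y x"
  unfolding hop_dist_def by (metis relpow_sym)

lemma card_exchange_le:
  assumes "finite A" and "y \<in> A"
  shows "card (A - {y} \<union> {z}) \<le> card A"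
proof -
  have "card (A - {y} \<union> {z}) \<le> Suc (card (A - {y}))"
    using assms(1) by (simp add: card_insert_if)
  also have "\<dots> = card A"
    using assms by (rule card_Suc_Diff1)
  finally show ?thesis .
qed

definition dist_sum :: "nat \<Rightarrow> (nat \<Rightarrow> nat set) \<Rightarrow> nat \<Rightarrow> nat" where
  "dist_sum n s u = (\<Sum>x\<in>players n. hop_dist (adj_rel n s) u x)"

lemma finite_players [simp]: "finite (players n)"
  and card_players [simp]: "card (players n) = n"
  by (simp_all add: players_def)

lemma sym_adj_rel: "sym (adj_rel n s)"
  by (auto simp: sym_def adj_rel_def adj_def)

lemma adj_rel_iff [simp]: "(u, v) \<in> adj_rel n s \<longleftrightarrow> adj n s u v"
  by (simp add: adj_rel_def)

lemma adj_sym: "adj n s u v \<Longrightarrow> adj n s v u"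
  by (auto simp: adj_def)

lemma adj_bought: "adj n s u v \<Longrightarrow> v \<in> s u \<or> u \<in> s v"
  by (simp add: adj_def)

lemma adj_players: "adj n s u v \<Longrightarrow> u \<in> players n \<and> v \<in> players n"
  by (auto simp: adj_def)

lemma gdist_eq_hop_dist:
  "(u, v) \<in> (adj_rel n s)\<^sup>* \<Longrightarrow> gdist n s u v = enat (hop_dist (adj_rel n s) u v)"
  by (simp add: gdist_def hop_dist_def rtrancl_power)

lemma Dsum_eq_dist_sum:
  assumes "u \<in> players n" and "\<forall>x\<in>players n. (u, x) \<in> (adj_rel n s)\<^sup>*"
  shows "Dsum n s u = ereal (real (dist_sum n s u))"
proof -
  have "dist_sum n s u = (\<Sum>x\<in>players n - {u}. hop_dist (adj_rel n s) u x)"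
    unfolding dist_sum_def using assms(1) by (simp add: sum.remove)
  then show ?thesis
    using assms(2) by (simp add: Dsum_def gdist_eq_hop_dist of_nat_sum)
qed

lemma sum_le_n_plus_dist_sum:
  assumes "\<forall>x\<in>players n. f x \<le> Suc (hop_dist (adj_rel n s) z x)"
  shows "(\<Sum>x\<in>players n. f x) \<le> n + dist_sum n s z"
proof -
  have "(\<Sum>x\<in>players n. f x) \<le> (\<Sum>x\<in>players n. Suc (hop_dist (adj_rel n s) z x))"
    using assms by (intro sum_mono) auto
  also have "\<dots> = n + dist_sum n s z"
    unfolding dist_sum_def Suc_eq_plus1 sum.distrib by simp
  finally show ?thesis .
qed

lemma nash_eq_dist_sum_le:
  assumes "\<alpha> \<ge> 0" and "nash_eq \<alpha> n s" and "w \<in> players n"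
    and "t \<subseteq> players n - {w}" and "card t \<le> card (s w)"
    and "\<forall>x\<in>players n. (w, x) \<in> (adj_rel n s)\<^sup>*"
    and "\<forall>x\<in>players n. (w, x) \<in> (adj_rel n (s(w := t)))\<^sup>*"
  shows "dist_sum n s w \<le> dist_sum n (s(w := t)) w"
proof -
  have "\<not> cost \<alpha> n (s(w := t)) w < cost \<alpha> n s w"
    using assms(2-4) unfolding nash_eq_def by blast
  moreover have "\<alpha> * real (card t) \<le> \<alpha> * real (card (s w))"
    using assms(1,5) by (simp add: mult_left_mono)
  ultimately show ?thesis
    using assms(3,6,7) by (simp add: cost_def Dsum_eq_dist_sum)
qed

lemma nash_eq_connected:
  assumes "nash_eq \<alpha> n s" and "x \<in> players n" and "y \<in> players n"
  shows "(x, y) \<in> (adj_rel n s)\<^sup>*"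
proof (rule ccontr)
  assume unreachable: "(x, y) \<notin> (adj_rel n s)\<^sup>*"
  then have "y \<in> players n - {x}" and "gdist n s x y = \<infinity>"
    using assms(3) by (auto simp: gdist_def rtrancl_power[symmetric])
  then have "cost \<alpha> n s x = \<infinity>"
    unfolding cost_def Dsum_def
    using sum_Pinfty[of "\<lambda>z. ereal_of_enat (gdist n s x z)" "players n - {x}"] by force
  moreover
  let ?s = "s(x := players n - {x})"
  have "(x, z) \<in> (adj_rel n ?s)\<^sup>*" if "z \<in> players n" for z
    using that assms(2) by (cases "z = x") (auto simp: adj_def)
  then have "cost \<alpha> n ?s x < \<infinity>"
    using assms(2) by (simp add: cost_def Dsum_eq_dist_sum)
  ultimately show False
    using assms(1,2) unfolding nash_eq_def by fastforce
qed

lemma edges_adj: "{a, b} \<in> edges n s \<Longrightarrow> adj n s a b"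
  unfolding edges_def by (auto simp: doubleton_eq_iff adj_def)

lemma two_ec_edge: "two_ec n s W F \<Longrightarrow> {a, b} \<in> F \<Longrightarrow> adj n s a b \<and> a \<in> W \<and> b \<in> W"
  unfolding two_ec_def subgraph_def using edges_adj by blast

lemma two_ec_players: "two_ec n s W F \<Longrightarrow> W \<subseteq> players n"
  unfolding two_ec_def subgraph_def by blast

lemma two_ec_two_neighbours:
  assumes "two_ec n s W F" and "t \<in> W" and "card W \<ge> 2"
  obtains r1 r2 where "r1 \<noteq> r2" and "{t, r1} \<in> F" and "{t, r2} \<in> F"
proof -
  have "card (W - {t}) \<ge> 1"
    using assms(2,3) by (simp add: card_Diff_singleton_if)
  then obtain y where y: "y \<in> W" "y \<noteq> t"
    by (metis Diff_iff card.empty empty_iff insertI1 not_one_le_zero subsetI subset_antisym)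
  have "(t, y) \<in> {(a, b). {a, b} \<in> F}\<^sup>*"
    using assms(1,2) y(1) unfolding two_ec_def sg_connected_def by blast
  then obtain r where r: "{t, r} \<in> F"
    using y(2) by (auto elim: converse_rtranclE)
  have "r \<noteq> t" and "r \<in> W"
    using two_ec_edge[OF assms(1) r] by (auto simp: adj_def)
  moreover have "(t, r) \<in> {(a, b). {a, b} \<in> F - {{t, r}}}\<^sup>*"
    using assms(1,2) r \<open>r \<in> W\<close> unfolding two_ec_def bridgeless_def sg_connected_def by blast
  ultimately obtain r2 where "{t, r2} \<in> F - {{t, r}}"
    by (auto elim: converse_rtranclE)
  then show thesis
    using that r by blast
qed

locale nash_network =
  fixes \<alpha> :: real and n :: nat and s :: "nat \<Rightarrow> nat set"
  assumes alpha_nonneg: "\<alpha> \<ge> 0"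
    and nash: "nash_eq \<alpha> n s"
begin

abbreviation d :: "nat \<Rightarrow> nat \<Rightarrow> nat" where
  "d \<equiv> hop_dist (adj_rel n s)"

abbreviation D :: "nat \<Rightarrow> nat" where
  "D \<equiv> dist_sum n s"

lemma reachable: "x \<in> players n \<Longrightarrow> y \<in> players n \<Longrightarrow> (x, y) \<in> (adj_rel n s)\<^sup>*"
  using nash_eq_connected[OF nash] .

lemma d_sym: "d x y = d y x"
  using hop_dist_sym[OF sym_adj_rel] .

lemma d_triangle: "x \<in> players n \<Longrightarrow> y \<in> players n \<Longrightarrow> z \<in> players n \<Longrightarrow> d x z \<le> d x y + d y z"
  by (intro hop_dist_triangle reachable)

lemma d_adj: "v \<in> players n \<Longrightarrow> adj n s a b \<Longrightarrow> d v b \<le> Suc (d v a)"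
  by (intro hop_dist_step reachable) (simp_all add: adj_players)

lemma d_predecessorE:
  assumes "z \<in> players n" and "x \<in> players n" and "d z x = Suc k"
  obtains p where "adj n s p x" and "p \<in> players n" and "d z p = k"
proof -
  obtain p where "(z, p) \<in> (adj_rel n s)\<^sup>*" "adj n s p x" "d z p = k"
    using hop_dist_SucE[OF reachable[OF assms(1,2)] assms(3)] by auto
  then show thesis
    using that adj_players by blast
qed

lemma D_le_adj:
  assumes "adj n s u q"
  shows "D u \<le> n + D q"
proof -
  have "d u x \<le> Suc (d q x)" if "x \<in> players n" for x
    using d_adj[OF that adj_sym[OF assms]] by (metis d_sym)
  then show ?thesis
    unfolding dist_sum_def[of n s u] by (intro sum_le_n_plus_dist_sum) blast
qed

text \<open>
  The breadth-first search from \<open>z\<close> survives the swap of \<open>wy\<close> for \<open>wz\<close> if it can reach \<open>y\<close>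
  through a parent other than \<open>w\<close>.
\<close>
lemma swap_keeps_parent:
  assumes "z \<in> players n"
    and other_parent: "d z y = Suc (d z w) \<Longrightarrow> \<exists>p. adj n s p y \<and> p \<noteq> w \<and> Suc (d z p) = d z y"
    and "x \<in> players n" and "d z x = Suc k"
  shows "x = w \<or> (\<exists>q\<in>players n. d z q = k \<and> (q, x) \<in> adj_rel n (s(w := s w - {y} \<union> {z})))"
proof -
  let ?E = "adj_rel n (s(w := s w - {y} \<union> {z}))"
  obtain p where p: "adj n s p x" "p \<in> players n" "d z p = k"
    using d_predecessorE[OF assms(1,3,4)] .
  have "(p = y \<and> x = w) \<or> (p = w \<and> x = y) \<or> (p, x) \<in> ?E"
    using p(1) by (auto simp: adj_def)
  then consider "x = w" | "p = w" "x = y" | "(p, x) \<in> ?E"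
    by blast
  then show ?thesis
  proof cases
    case 2
    then obtain p' where p': "adj n s p' y" "p' \<noteq> w" "Suc (d z p') = d z y"
      using other_parent p(3) assms(4) by auto
    have "w \<noteq> y"
      using p(1) 2 by (simp add: adj_def)
    then have "(p', y) \<in> ?E"
      using p'(1,2) by (auto simp: adj_def)
    moreover have "p' \<in> players n" "d z p' = k"
      using adj_players[OF p'(1)] p'(3) 2 assms(4) by auto
    ultimately show ?thesis
      using 2 by blast
  qed (use p in blast)+
qed

lemma swap_path:
  assumes "w \<in> players n" and "z \<in> players n" and "w \<noteq> z"
    and "d z y = Suc (d z w) \<Longrightarrow> \<exists>p. adj n s p y \<and> p \<noteq> w \<and> Suc (d z p) = d z y"
    and "x \<in> players n"
  shows "\<exists>k \<le> Suc (d z x). (w, x) \<in> adj_rel n (s(w := s w - {y} \<union> {z})) ^^ k"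
  using assms(5)
proof (induction "d z x" arbitrary: x)
  case 0
  then have "x = z"
    using hop_dist_eq_0_iff[OF reachable[OF assms(2) 0(2)]] by simp
  moreover have "(w, z) \<in> adj_rel n (s(w := s w - {y} \<union> {z})) ^^ Suc 0"
    using assms(1-3) by (auto simp: adj_def)
  moreover have "Suc 0 \<le> Suc (d z x)"
    by simp
  ultimately show ?case
    by blast
next
  case (Suc k)
  let ?E = "adj_rel n (s(w := s w - {y} \<union> {z}))"
  consider "x = w" | q where "q \<in> players n" "d z q = k" "(q, x) \<in> ?E"
    using swap_keeps_parent[OF assms(2,4) Suc.prems Suc.hyps(2)[symmetric]] by blast
  then show ?case
  proof cases
    case 1
    then show ?thesis
      by (intro exI[of _ 0]) simp
  next
    case (2 q)
    obtain k' where k': "k' \<le> Suc k" "(w, q) \<in> ?E ^^ k'"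
      using Suc.hyps(1) 2(1,2) by blast
    have "(w, x) \<in> ?E ^^ Suc k'"
      using k'(2) 2(3) by (rule relpow_Suc_I)
    then show ?thesis
      using k'(1) Suc.hyps(2) by (intro exI[of _ "Suc k'"]) simp
  qed
qed

lemma D_le_swap:
  assumes "w \<in> players n" and "z \<in> players n" and "y \<in> s w"
    and "d z y = Suc (d z w) \<Longrightarrow> \<exists>p. adj n s p y \<and> p \<noteq> w \<and> Suc (d z p) = d z y"
  shows "D w \<le> n + D z"
proof (cases "w = z")
  case wz: False
  define t where "t = s w - {y} \<union> {z}"
  let ?s = "s(w := t)"
  have paths: "\<exists>k \<le> Suc (d z x). (w, x) \<in> adj_rel n ?s ^^ k" if "x \<in> players n" for x
    unfolding t_def by (rule swap_path[OF assms(1,2) wz assms(4) that])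
  have "valid_profile n s"
    using nash unfolding nash_eq_def by (rule conjunct1)
  then have sw: "s w \<subseteq> players n - {w}"
    using assms(1) unfolding valid_profile_def by blast
  then have "t \<subseteq> players n - {w}"
    using assms(2) wz by (auto simp: t_def)
  moreover have "finite (s w)"
    using sw by (rule finite_subset) simp
  then have "card t \<le> card (s w)"
    unfolding t_def using assms(3) by (rule card_exchange_le)
  moreover have "\<forall>x\<in>players n. (w, x) \<in> (adj_rel n ?s)\<^sup>*"
    using paths rtrancl_power by blast
  ultimately have "D w \<le> dist_sum n ?s w"
    using nash_eq_dist_sum_le[OF alpha_nonneg nash assms(1)] reachable assms(1) by blast
  also have "\<dots> \<le> n + D z"
  proof -
    have "hop_dist (adj_rel n ?s) w x \<le> Suc (d z x)" if x: "x \<in> players n" for x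
    proof -
      obtain k where k: "k \<le> Suc (d z x)" "(w, x) \<in> adj_rel n ?s ^^ k"
        using paths[OF x] by blast
      show ?thesis
        using hop_dist_le[OF k(2)] k(1) by linarith
    qed
    then show ?thesis
      unfolding dist_sum_def[of n ?s w] by (intro sum_le_n_plus_dist_sum) blast
  qed
  finally show ?thesis .
qed simp

lemma D_le_swap_closer:
  "w \<in> players n \<Longrightarrow> v \<in> players n \<Longrightarrow> y \<in> s w \<Longrightarrow> d v y \<le> d v w \<Longrightarrow> D w \<le> n + D v"
  by (rule D_le_swap) auto

lemma D_le_swap_other_parent:
  "w \<in> players n \<Longrightarrow> v \<in> players n \<Longrightarrow> y \<in> s w \<Longrightarrow> adj n s p y \<Longrightarrow> p \<noteq> w \<Longrightarrow>
    Suc (d v p) = d v y \<Longrightarrow> D w \<le> n + D v"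
  by (rule D_le_swap) blast+

lemma D_le_by_edge_owner:
  assumes "adj n s t r"
    and "r \<in> s t \<Longrightarrow> D t \<le> n + D v" and "t \<in> s r \<Longrightarrow> D r \<le> n + D v"
  shows "D t \<le> 2 * n + D v"
  using adj_bought[OF assms(1)]
proof
  assume "t \<in> s r"
  then show ?thesis
    using assms(3) D_le_adj[OF assms(1)] by simp
qed (use assms(2) in simp)

lemma D_le_at_peak:
  assumes "two_ec n s W F" and "card W \<ge> 2" and "v \<in> players n" and "t \<in> W"
    and peak: "\<forall>r. {t, r} \<in> F \<longrightarrow> d v r \<le> d v t"
  shows "D t \<le> 2 * n + D v"
proof -
  obtain r1 r2 where r: "r1 \<noteq> r2" "{t, r1} \<in> F" "{t, r2} \<in> F"
    using two_ec_two_neighbours[OF assms(1,4,2)] .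
  have adj: "adj n s t r1" "adj n s t r2"
    using two_ec_edge[OF assms(1)] r(2,3) by blast+
  have players: "t \<in> players n" "r1 \<in> players n"
    using adj(1) adj_players by blast+
  show ?thesis
  proof (cases "d v r1 = d v t \<or> d v r2 = d v t")
    case True
    then obtain r where level: "adj n s t r" "d v r = d v t"
      using adj by blast
    show ?thesis
    proof (rule D_le_by_edge_owner[OF level(1)])
      show "D t \<le> n + D v" if "r \<in> s t"
        using D_le_swap_closer[OF players(1) assms(3) that] level(2) by simp
      show "D r \<le> n + D v" if "t \<in> s r"
        using D_le_swap_closer[OF _ assms(3) that] adj_players[OF level(1)] level(2) by simp
    qed
  next
    case False
    have "d v r1 \<le> d v t" "d v r2 \<le> d v t"
      using peak r(2,3) by blast+
    moreover have "d v t \<le> Suc (d v r1)" "d v t \<le> Suc (d v r2)"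
      using d_adj[OF assms(3) adj_sym[OF adj(1)]] d_adj[OF assms(3) adj_sym[OF adj(2)]] .
    ultimately have below: "Suc (d v r1) = d v t" "Suc (d v r2) = d v t"
      using False by linarith+
    show ?thesis
    proof (rule D_le_by_edge_owner[OF adj(1)])
      show "D t \<le> n + D v" if "r1 \<in> s t"
        using D_le_swap_closer[OF players(1) assms(3) that] below(1) by simp
      show "D r1 \<le> n + D v" if "t \<in> s r1"
        using D_le_swap_other_parent[OF players(2) assms(3) that adj_sym[OF adj(2)]] r(1) below(2)
        by blast
    qed
  qed
qed

lemma peak_above:
  assumes "two_ec n s W F" and "card W \<ge> 2" and "v \<in> players n" and "q \<in> W"
  shows "\<exists>t\<in>W. D t \<le> 2 * n + D v \<and> d v q + d q t = d v t"
proof -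
  define M where "M = Max (d v ` players n)"
  have W: "W \<subseteq> players n"
    using two_ec_players[OF assms(1)] .
  have le_M: "d v x \<le> M" if "x \<in> W" for x
    unfolding M_def using that W by (intro Max_ge) auto
  show ?thesis
    using assms(4)
  proof (induction "M - d v q" arbitrary: q rule: less_induct)
    case less
    show ?case
    proof (cases "\<exists>r. {q, r} \<in> F \<and> d v q < d v r")
      case False
      then have "\<forall>r. {q, r} \<in> F \<longrightarrow> d v r \<le> d v q"
        by (auto simp: not_less)
      then have "D q \<le> 2 * n + D v"
        by (rule D_le_at_peak[OF assms(1-3) less.prems])
      then show ?thesis
        using less.prems by (intro bexI[of _ q]) simp_all
    next
      case True
      then obtain r where r: "{q, r} \<in> F" "d v q < d v r"
        by blast
      have adj: "adj n s q r" and "r \<in> W"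
        using two_ec_edge[OF assms(1) r(1)] by blast+
      then have "M - d v r < M - d v q"
        using le_M[of r] r(2) by linarith
      then obtain t where t: "t \<in> W" "D t \<le> 2 * n + D v" "d v r + d r t = d v t"
        using less.hyps \<open>r \<in> W\<close> by blast
      have players: "q \<in> players n" "r \<in> players n" "t \<in> players n"
        using W less.prems \<open>r \<in> W\<close> t(1) by blast+
      have "d v r = Suc (d v q)"
        using d_adj[OF assms(3) adj] r(2) by simp
      moreover have "d q t \<le> Suc (d r t)"
        using d_adj[OF players(3) adj_sym[OF adj]] by (simp add: d_sym)
      moreover have "d v t \<le> d v q + d q t"
        using d_triangle[OF assms(3) players(1,3)] .
      ultimately have "d v q + d q t = d v t"
        using t(3) by linarith
      then show ?thesis
        using t(1,2) by blast
    qed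
  qed
qed

lemma D_le_in_two_ec:
  assumes "two_ec n s W F" and "card W \<ge> 2" and "v \<in> players n" and "u \<in> W"
  shows "D u \<le> 3 * n + D v"
proof (cases "\<forall>q. {u, q} \<in> F \<longrightarrow> d v q \<le> d v u")
  case True
  then show ?thesis
    using D_le_at_peak[OF assms True] by simp
next
  case False
  then obtain q where q: "{u, q} \<in> F" "d v u < d v q"
    by (auto simp: not_le)
  have adj: "adj n s u q" and "q \<in> W"
    using two_ec_edge[OF assms(1) q(1)] by blast+
  have players: "u \<in> players n" "q \<in> players n"
    using adj_players[OF adj] by blast+
  have q_above: "d v q = Suc (d v u)"
    using d_adj[OF assms(3) adj] q(2) by simp
  show ?thesis
  proof (cases "u \<in> s q")
    case True
    then show ?thesis
      using D_le_swap_closer[OF players(2) assms(3) True] D_le_adj[OF adj] q_above by simp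
  next
    case False
    then have bought: "q \<in> s u"
      using adj_bought[OF adj] by blast
    obtain t where t: "t \<in> W" "D t \<le> 2 * n + D v" "d v q + d q t = d v t"
      using peak_above[OF assms(1-3) \<open>q \<in> W\<close>] by blast
    have t_player: "t \<in> players n"
      using two_ec_players[OF assms(1)] t(1) by blast
    have "D u \<le> n + D t"
    proof (rule D_le_swap[OF players(1) t_player bought])
      assume q_next: "d t q = Suc (d t u)"
      then obtain p where p: "adj n s p q" "p \<in> players n" "d t p = d t u"
        using d_predecessorE[OF t_player players(2)] by blast
      have "p \<noteq> u"
      proof
        assume "p = u"
        have "d v t \<le> d v u + d u t"
          using d_triangle[OF assms(3) players(1) t_player] .
        then show False
          using t(3) q_above q_next by (simp add: d_sym)
      qed
      then show "\<exists>p. adj n s p q \<and> p \<noteq> u \<and> Suc (d t p) = d t q"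
        using p q_next by auto
    qed
    then show ?thesis
      using t(2) by simp
  qed
qed

end

theorem proposition1:
  fixes \<alpha> :: real and n :: nat and s :: "nat \<Rightarrow> nat set" and W :: "nat set" and F :: "nat set set"
  assumes "\<alpha> > 0"
    and "nash_eq \<alpha> n s"
    and "two_ec_component n s W F"
    and "card W \<ge> 3"
    and "u \<in> W" and "v \<in> W"
  shows "\<bar>Dsum n s u - Dsum n s v\<bar> \<le> ereal (3 * real n)"
proof -
  interpret nash_network \<alpha> n s
    using assms(1,2) by unfold_locales simp_all
  have two_ec: "two_ec n s W F"
    using assms(3) unfolding two_ec_component_def by blast
  have players: "u \<in> players n" "v \<in> players n"
    using two_ec_players[OF two_ec] assms(5,6) by blast+
  have "D u \<le> 3 * n + D v" "D v \<le> 3 * n + D u"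
    using D_le_in_two_ec[OF two_ec _ players(2) assms(5)]
      D_le_in_two_ec[OF two_ec _ players(1) assms(6)] assms(4) by simp_all
  then have "\<bar>real (D u) - real (D v)\<bar> \<le> 3 * real n"
    by linarith
  moreover have "Dsum n s u = ereal (D u)" "Dsum n s v = ereal (D v)"
    using players by (simp_all add: Dsum_eq_dist_sum reachable)
  ultimately show ?thesis
    by simp
qed

end
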